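(* Fix a real number $\alpha>1$ and consider the family $f_a(x)=-|x|^{\alpha}+a$, $a\in\mathbb{R}$. Restrict to parameters $a>1$ for which the rescaled post-critical orbit satisfies $2_a\in(-1,0)$, $3_a\in(0,1)$ and $4_a$ lies strictly between $2_a$ and $-2_a$. For such parameters put $t=p_{1,-1}(2_a)>0$ and $g(t)=p_{2_a,-2_a}(4_a)$. Then the inverse function $g^{-1}\colon\mathbb{R}\to\mathbb{R}_+$ is strictly increasing, and $g'(t)>1$. In particular, the value $g(t)=0$, i.e. $4_a=0$ (the super-stable orbit with kneading sequence $RLRC$), is assumed for only one parameter.
   Context: Poincaré coordinates: for real $p\neq q$ and $x$ strictly between $p$ and $q$ (the oriented open interval $(p,q)$, where $p>q$ is allowed), $p_{p,q}(x)=\ln\frac{x-p}{q-x}$. Rescaled orbit: for $n\ge0$ write $n_a=f_a^n(0)/f_a(0)$ (so $0_a=0$, $1_a=1$), i.e. $n_a$ is the $n$-th iterate of $0$ under $x\mapsto 1-a^{\alpha-1}|x|^{\alpha}$. The kneading sequence $RLRC$ means $1_a>0$, $2_a<0$, $3_a>0$, $4_a=0$. *)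

theory Defs
  imports "HOL-Analysis.Analysis"
begin

definition poincare :: "real \<Rightarrow> real \<Rightarrow> real \<Rightarrow> real" where
  "poincare p q x = ln ((x - p) / (q - x))"

text \<open>Rescaled orbit n_a = f_a^n(0) / f_a(0): the n-th iterate of 0 under
  x |-> 1 - a^(alpha-1) |x|^alpha.\<close>
definition rorb :: "real \<Rightarrow> real \<Rightarrow> nat \<Rightarrow> real" where
  "rorb \<alpha> a n = ((\<lambda>x. 1 - a powr (\<alpha> - 1) * \<bar>x\<bar> powr \<alpha>) ^^ n) 0"

definition admissible :: "real \<Rightarrow> real \<Rightarrow> bool" where
  "admissible \<alpha> a \<longleftrightarrow> a > 1
     \<and> -1 < rorb \<alpha> a 2 \<and> rorb \<alpha> a 2 < 0
     \<and> 0 < rorb \<alpha> a 3 \<and> rorb \<alpha> a 3 < 1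
     \<and> rorb \<alpha> a 2 < rorb \<alpha> a 4 \<and> rorb \<alpha> a 4 < - rorb \<alpha> a 2"

definition tpar :: "real \<Rightarrow> real \<Rightarrow> real" where
  "tpar \<alpha> a = poincare 1 (-1) (rorb \<alpha> a 2)"

definition Tset :: "real \<Rightarrow> real set" where
  "Tset \<alpha> = tpar \<alpha> ` {a. admissible \<alpha> a}"

definition apar :: "real \<Rightarrow> real \<Rightarrow> real" where
  "apar \<alpha> t = (THE a. admissible \<alpha> a \<and> tpar \<alpha> a = t)"

definition gfun :: "real \<Rightarrow> real \<Rightarrow> real" where
  "gfun \<alpha> t = (let a = apar \<alpha> t in
     poincare (rorb \<alpha> a 2) (- rorb \<alpha> a 2) (rorb \<alpha> a 4))"

end

theory Submission
  imports Defs
begin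

(* Put e = -2_a = a^(\<alpha>-1) - 1. Then 3_a = 1 - (1 + e) e^\<alpha>, 4_a = 1 - (1 + e) u with u = 3_a^\<alpha>,
   t = 2 artanh e, and a direct computation gives

     g(t) = t + H(e),   H = L - ln (2 - exp L),   exp L = (1 - u)(1 - e) / (e u),

   where admissibility amounts to exp L < 2. The one genuine estimate is that L is strictly
   increasing in e; it follows from two applications of Bernoulli's inequality for real powers.
   Hence H' > 0 and, as e = tanh (t/2), g'(t) = 1 + H'(e) (1 - e^2)/2 > 1, so g is strictly
   increasing. It is onto by the intermediate value theorem, because exp L tends to 0 with e
   and reaches 2 before 3_a vanishes. *)

lemma powr_ge_Bernoulli:
  fixes p x :: real
  assumes "1 \<le> p" "0 < x"
  shows "1 + p * (x - 1) \<le> x powr p"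
proof -
  have "p * (x - 1) \<le> x powr p - 1 powr p"
    by (rule convex_on_imp_above_tangent[OF powr_convex[OF assms(1)]])
       (use assms in \<open>auto intro!: derivative_eq_intros simp: interior_open\<close>)
  then show ?thesis by simp
qed

lemma tanh_artanh_real:
  fixes x :: real
  assumes "-1 < x" "x < 1"
  shows "tanh (artanh x) = x"
proof -
  have "exp (- 2 * artanh x) = (1 - x) / (1 + x)"
    using assms by (simp add: artanh_def exp_minus)
  then have "tanh (artanh x) = (1 - (1 - x) / (1 + x)) / (1 + (1 - x) / (1 + x))"
    by (simp only: tanh_real_altdef)
  also have "\<dots> = x"
    using assms by (simp add: field_simps)
  finally show ?thesis .
qed

lemma strict_mono_on_the_inv_into:
  fixes f :: "'a::linorder \<Rightarrow> 'b::linorder"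
  assumes "strict_mono_on A f"
  shows "strict_mono_on (f ` A) (the_inv_into A f)"
proof (rule strict_mono_onI)
  have inj: "inj_on f A" by (rule strict_mono_on_imp_inj_on[OF assms])
  fix r s assume "r \<in> f ` A" "s \<in> f ` A" "r < s"
  then obtain x y where "x \<in> A" "y \<in> A" "r = f x" "s = f y" "f x < f y" by blast
  then show "the_inv_into A f r < the_inv_into A f s"
    using strict_mono_on_less[OF assms] by (simp add: the_inv_into_f_f[OF inj])
qed

lemma rorb_Suc: "rorb \<alpha> a (Suc n) = 1 - a powr (\<alpha> - 1) * \<bar>rorb \<alpha> a n\<bar> powr \<alpha>"
  by (simp add: rorb_def)

lemma rorb_0 [simp]: "rorb \<alpha> a 0 = 0"
  by (simp add: rorb_def)

lemma poincare_neg_eq_0_iff: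
  assumes "p < x" "x < - p"
  shows "poincare p (- p) x = 0 \<longleftrightarrow> x = 0"
proof -
  have "0 < (x - p) / (- p - x)" using assms by simp
  then have "poincare p (- p) x = 0 \<longleftrightarrow> (x - p) / (- p - x) = 1"
    unfolding poincare_def by simp
  also have "\<dots> \<longleftrightarrow> x = 0" using assms by (simp add: divide_eq_1_iff)
  finally show ?thesis .
qed

context
  fixes \<alpha> :: real
  assumes \<alpha>_gt_1: "1 < \<alpha>"
begin

(* 3_a and 4_a as functions of e = epar a; orb4 e is 4_a only where 3_a > 0. *)
definition orb3 :: "real \<Rightarrow> real" where
  "orb3 e = 1 - (1 + e) * e powr \<alpha>"

definition orb4 :: "real \<Rightarrow> real" where
  "orb4 e = 1 - (1 + e) * orb3 e powr \<alpha>"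

definition Edom :: "real set" where
  "Edom = {e. 0 < e \<and> e < 1 \<and> 0 < orb3 e}"

definition logq :: "real \<Rightarrow> real" where
  "logq e = ln (1 - orb3 e powr \<alpha>) - \<alpha> * ln (orb3 e) + ln (1 - e) - ln e"

definition dlogq :: "real \<Rightarrow> real" where
  "dlogq e = \<alpha> * (e powr \<alpha> + (1 + e) * \<alpha> * e powr (\<alpha> - 1))
      / (orb3 e * (1 - orb3 e powr \<alpha>)) - 1 / (e * (1 - e))"

definition Eadm :: "real set" where
  "Eadm = {e \<in> Edom. exp (logq e) < 2}"

definition gexcess :: "real \<Rightarrow> real" where
  "gexcess e = logq e - ln (2 - exp (logq e))"

definition epar :: "real \<Rightarrow> real" where
  "epar a = a powr (\<alpha> - 1) - 1"

definition epar_inv :: "real \<Rightarrow> real" where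
  "epar_inv e = (1 + e) powr (1 / (\<alpha> - 1))"

lemma orb3_strict_antimono:
  assumes "0 < x" "x < y"
  shows "orb3 y < orb3 x"
proof -
  have "x powr \<alpha> < y powr \<alpha>" using assms \<alpha>_gt_1 by (intro powr_less_mono2) auto
  then have "(1 + x) * x powr \<alpha> < (1 + y) * y powr \<alpha>" using assms by (intro mult_strict_mono) auto
  then show ?thesis unfolding orb3_def by simp
qed

lemma EdomD:
  assumes "e \<in> Edom"
  shows "0 < e" "e < 1" "0 < orb3 e" "orb3 e < 1" "0 < orb3 e powr \<alpha>" "orb3 e powr \<alpha> < 1"
proof -
  show e: "0 < e" "e < 1" "0 < orb3 e" using assms by (auto simp: Edom_def)
  then show "orb3 e < 1" unfolding orb3_def by simp
  then show "0 < orb3 e powr \<alpha>" "orb3 e powr \<alpha> < 1"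
    using e \<alpha>_gt_1 powr_less_mono2[of \<alpha> "orb3 e" 1] by auto
qed

lemma Edom_downward:
  assumes "y \<in> Edom" "0 < x" "x \<le> y"
  shows "x \<in> Edom"
  using assms orb3_strict_antimono[of x y] by (cases "x = y") (auto simp: Edom_def)

lemma exp_logq:
  assumes "e \<in> Edom"
  shows "exp (logq e) = (1 - orb3 e powr \<alpha>) * (1 - e) / (e * orb3 e powr \<alpha>)"
proof -
  note E = EdomD[OF assms]
  have "exp (\<alpha> * ln (orb3 e)) = orb3 e powr \<alpha>" using E by (simp add: powr_def mult.commute)
  then show ?thesis using E by (simp add: logq_def exp_diff exp_add)
qed

lemma orb4_gt_neg:
  assumes "e \<in> Edom"
  shows "- e < orb4 e"
proof -
  note E = EdomD[OF assms]
  have "(1 + e) * orb3 e powr \<alpha> < 1 + e" using E by simp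
  then show ?thesis unfolding orb4_def by simp
qed

lemma orb4_less_iff:
  assumes "e \<in> Edom"
  shows "orb4 e < e \<longleftrightarrow> exp (logq e) < 2"
proof -
  note E = EdomD[OF assms]
  have "exp (logq e) < 2 \<longleftrightarrow> (1 - orb3 e powr \<alpha>) * (1 - e) < 2 * (e * orb3 e powr \<alpha>)"
    unfolding exp_logq[OF assms] using E by (simp add: pos_divide_less_eq)
  also have "\<dots> \<longleftrightarrow> orb4 e < e" unfolding orb4_def by (simp add: algebra_simps)
  finally show ?thesis by simp
qed

lemma has_real_derivative_orb3:
  assumes "0 < e"
  shows "(orb3 has_real_derivative - (e powr \<alpha> + (1 + e) * \<alpha> * e powr (\<alpha> - 1))) (at e)"
  unfolding orb3_def[abs_def] using assms
  by (auto intro!: derivative_eq_intros simp: algebra_simps)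

lemma has_real_derivative_logq:
  assumes "e \<in> Edom"
  shows "(logq has_real_derivative dlogq e) (at e)"
proof -
  note E = EdomD[OF assms]
  define d where "d = e powr \<alpha> + (1 + e) * \<alpha> * e powr (\<alpha> - 1)"
  have "(orb3 has_real_derivative - d) (at e)"
    unfolding d_def by (rule has_real_derivative_orb3[OF E(1)])
  then have "(logq has_real_derivative - (\<alpha> * orb3 e powr (\<alpha> - 1) * - d) / (1 - orb3 e powr \<alpha>)
      - \<alpha> * (- d / orb3 e) - 1 / (1 - e) - 1 / e) (at e)"
    unfolding logq_def[abs_def] using E by (auto intro!: derivative_eq_intros)
  moreover have "orb3 e powr (\<alpha> - 1) = orb3 e powr \<alpha> / orb3 e"
    using E by (simp add: powr_diff)
  moreover have "- (\<alpha> * (orb3 e powr \<alpha> / orb3 e) * - d) / (1 - orb3 e powr \<alpha>) - \<alpha> * (- d / orb3 e)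
      - 1 / (1 - e) - 1 / e = dlogq e"
    using E unfolding dlogq_def d_def[symmetric]
    by (simp add: divide_simps) (simp add: algebra_simps)
  ultimately show ?thesis by simp
qed

lemma orb3_mult_less:
  assumes "0 < e" "e < 1"
  shows "orb3 e * (1 + e) < (e + (1 + e) * \<alpha>) * (1 - e)"
proof -
  (* With F the difference and A = (\<alpha> - 1)(1 - e^2): e^\<alpha> > 0 gives e F > e (A - 2 e^2),
     Bernoulli gives F \<ge> e (1 + e^2 - A); adding, (1 + e) F > e (1 - e^2). *)
  define P where "P = e powr \<alpha>"
  have P: "0 < P" "1 + \<alpha> * (e - 1) \<le> P"
    using assms powr_ge_Bernoulli[of \<alpha> e] \<alpha>_gt_1 by (auto simp: P_def)
  have "(1 + e)^2 * (1 + \<alpha> * (e - 1)) \<le> (1 + e)^2 * P" using P by (intro mult_left_mono) auto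
  moreover have "0 < e * ((1 + e)^2 * P)" using assms P by simp
  moreover have "0 < e * (1 - e^2)" using assms by (simp add: abs_square_less_1)
  ultimately have "0 < (1 + e) * ((e + (1 + e) * \<alpha>) * (1 - e) - (1 - (1 + e) * P) * (1 + e))"
    by (simp add: algebra_simps power2_eq_square power3_eq_cube)
  then show ?thesis using assms by (simp add: zero_less_mult_iff orb3_def P_def)
qed

lemma dlogq_pos:
  assumes "e \<in> Edom"
  shows "0 < dlogq e"
proof -
  note E = EdomD[OF assms]
  define d where "d = e powr \<alpha> + (1 + e) * \<alpha> * e powr (\<alpha> - 1)"
  have "e * e powr (\<alpha> - 1) = e powr \<alpha>" using E by (simp add: powr_mult_base)
  then have ed: "e * d = e powr \<alpha> * (e + (1 + e) * \<alpha>)" unfolding d_def by (simp add: algebra_simps)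
  have "1 - orb3 e powr \<alpha> \<le> \<alpha> * (1 - orb3 e)"
    using powr_ge_Bernoulli[of \<alpha> "orb3 e"] \<alpha>_gt_1 E by (simp add: algebra_simps)
  then have "orb3 e * (1 - orb3 e powr \<alpha>) \<le> orb3 e * (\<alpha> * (1 - orb3 e))"
    using E by (intro mult_left_mono) auto
  also have "\<dots> = \<alpha> * e powr \<alpha> * (orb3 e * (1 + e))"
    by (simp add: orb3_def[of e] algebra_simps)
  also have "\<dots> < \<alpha> * e powr \<alpha> * ((e + (1 + e) * \<alpha>) * (1 - e))"
    using orb3_mult_less[OF E(1,2)] E \<alpha>_gt_1 by simp
  also have "\<dots> = \<alpha> * d * (e * (1 - e))" using ed by (simp add: algebra_simps)
  finally have "1 / (e * (1 - e)) < \<alpha> * d / (orb3 e * (1 - orb3 e powr \<alpha>))"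
    using E by (simp add: divide_simps mult.commute)
  then show ?thesis unfolding dlogq_def d_def[symmetric] by simp
qed

lemma logq_strict_mono_on: "strict_mono_on Edom logq"
proof (rule strict_mono_onI)
  fix x y assume xy: "x \<in> Edom" "y \<in> Edom" "x < y"
  show "logq x < logq y"
  proof (rule DERIV_pos_imp_increasing[OF xy(3)])
    fix z assume z: "x \<le> z" "z \<le> y"
    then have "0 < z" using EdomD(1)[OF xy(1)] by linarith
    then have "z \<in> Edom" using Edom_downward[OF xy(2)] z by blast
    then show "\<exists>D. (logq has_real_derivative D) (at z) \<and> 0 < D"
      using has_real_derivative_logq dlogq_pos by blast
  qed
qed

lemma continuous_on_orb3: "continuous_on {0<..} orb3"
  using has_real_derivative_orb3
  by (intro continuous_at_imp_continuous_on ballI DERIV_isCont) auto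

lemma continuous_on_exp_logq: "continuous_on Edom (\<lambda>e. exp (logq e))"
  using has_real_derivative_logq
  by (intro continuous_at_imp_continuous_on ballI continuous_intros DERIV_isCont) auto

lemma open_Edom: "open Edom"
proof -
  have "Edom = orb3 -` {0<..} \<inter> {0<..<1}" by (auto simp: Edom_def)
  moreover have "continuous_on {0<..<1} orb3"
    using continuous_on_orb3 by (rule continuous_on_subset) auto
  ultimately show ?thesis
    by (metis continuous_on_open_vimage open_greaterThan open_greaterThanLessThan)
qed

lemma open_Eadm: "open Eadm"
proof -
  have "Eadm = (\<lambda>e. exp (logq e)) -` {..<2} \<inter> Edom" by (auto simp: Eadm_def)
  then show ?thesis
    by (metis continuous_on_open_vimage open_Edom open_lessThan continuous_on_exp_logq)
qed

lemma Eadm_downward: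
  assumes "y \<in> Eadm" "0 < x" "x \<le> y"
  shows "x \<in> Eadm"
proof -
  have "x \<in> Edom" "y \<in> Edom" using assms Edom_downward by (auto simp: Eadm_def)
  then have "exp (logq x) \<le> exp (logq y)"
    using strict_mono_on_leD[OF logq_strict_mono_on] assms(3) by simp
  also have "\<dots> < 2" using assms(1) by (simp add: Eadm_def)
  finally show ?thesis using \<open>x \<in> Edom\<close> by (simp add: Eadm_def)
qed

lemma has_real_derivative_gexcess:
  assumes "e \<in> Eadm"
  shows "(gexcess has_real_derivative 2 * dlogq e / (2 - exp (logq e))) (at e)"
proof -
  have E: "e \<in> Edom" "exp (logq e) < 2" using assms by (auto simp: Eadm_def)
  have "(gexcess has_real_derivative dlogq e - (- (exp (logq e) * dlogq e)) / (2 - exp (logq e))) (at e)"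
    unfolding gexcess_def[abs_def] using E
    by (auto intro!: derivative_eq_intros has_real_derivative_logq)
  moreover have "dlogq e - (- (exp (logq e) * dlogq e)) / (2 - exp (logq e))
      = 2 * dlogq e / (2 - exp (logq e))"
    using E by (simp add: divide_simps) (simp add: algebra_simps)
  ultimately show ?thesis by simp
qed

lemma exp_logq_le:
  assumes "0 < e" "e \<le> 1/3"
  shows "e \<in> Edom" "exp (logq e) \<le> 2 * \<alpha> * 2 powr \<alpha> * e powr (\<alpha> - 1)"
proof -
  have "e powr \<alpha> \<le> e" using assms \<alpha>_gt_1 by (intro powr_le_one_le) auto
  then have "(1 + e) * e powr \<alpha> \<le> (4/3) * (1/3)"
    using assms by (intro mult_mono) auto
  then have x: "1/2 \<le> orb3 e" unfolding orb3_def by simp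
  then show E: "e \<in> Edom" using assms by (simp add: Edom_def)
  note E = EdomD[OF E]
  have "(1/2) powr \<alpha> \<le> orb3 e powr \<alpha>" using x \<alpha>_gt_1 by (intro powr_mono2) auto
  then have inv_u: "1 / orb3 e powr \<alpha> \<le> 2 powr \<alpha>"
    using E by (simp add: powr_divide divide_simps mult.commute)
  have "1 - orb3 e powr \<alpha> \<le> \<alpha> * (1 - orb3 e)"
    using powr_ge_Bernoulli[of \<alpha> "orb3 e"] \<alpha>_gt_1 E by (simp add: algebra_simps)
  also have "\<dots> = \<alpha> * (1 + e) * e * e powr (\<alpha> - 1)"
    using assms by (simp add: orb3_def powr_mult_base)
  finally have "(1 - orb3 e powr \<alpha>) * (1 - e) \<le> \<alpha> * (1 + e) * e * e powr (\<alpha> - 1)"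
    using E mult_left_le[of "1 - e" "1 - orb3 e powr \<alpha>"] by linarith
  then have "exp (logq e) \<le> \<alpha> * (1 + e) * e powr (\<alpha> - 1) * (1 / orb3 e powr \<alpha>)"
    unfolding exp_logq[OF \<open>e \<in> Edom\<close>] using E by (simp add: divide_simps ac_simps)
  also have "\<dots> \<le> \<alpha> * 2 * e powr (\<alpha> - 1) * 2 powr \<alpha>"
    using assms \<alpha>_gt_1 inv_u by (intro mult_mono) auto
  finally show "exp (logq e) \<le> 2 * \<alpha> * 2 powr \<alpha> * e powr (\<alpha> - 1)" by (simp add: ac_simps)
qed

lemma exp_logq_small:
  assumes "0 < c"
  obtains e where "e \<in> Edom" "e \<le> 1/3" "exp (logq e) < c"
proof -
  define K where "K = 4 * \<alpha> * 2 powr \<alpha>"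
  have K: "0 < K" using \<alpha>_gt_1 by (simp add: K_def)
  define e where "e = min (1/3) ((c / K) powr (1 / (\<alpha> - 1)))"
  have e: "0 < e" "e \<le> 1/3" using assms K by (auto simp: e_def)
  have "e powr (\<alpha> - 1) \<le> ((c / K) powr (1 / (\<alpha> - 1))) powr (\<alpha> - 1)"
    using e \<alpha>_gt_1 by (intro powr_mono2) (auto simp: e_def)
  also have "\<dots> = c / K" using \<alpha>_gt_1 assms K by (simp add: powr_powr)
  finally have "2 * \<alpha> * 2 powr \<alpha> * e powr (\<alpha> - 1) \<le> c / 2"
    using K \<alpha>_gt_1 by (simp add: K_def divide_simps algebra_simps)
  then have "exp (logq e) < c" using exp_logq_le(2)[OF e] assms by linarith
  then show ?thesis using that exp_logq_le(1)[OF e] e by blast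
qed

lemma exp_logq_large:
  obtains e where "e \<in> Edom" "2 \<le> exp (logq e)"
proof -
  (* Where 3_a = (1 - e)/(1 + e), the bound 3_a^\<alpha> \<le> 3_a already forces 4_a \<ge> e. *)
  define \<phi> where "\<phi> e = orb3 e - (1 - e) / (1 + e)" for e
  have "(1/4::real) powr \<alpha> \<le> 1/4" using \<alpha>_gt_1 by (intro powr_le_one_le) auto
  then have "\<phi> 1 \<le> 0" "0 \<le> \<phi> (1/4)" by (simp_all add: \<phi>_def orb3_def)
  moreover have "continuous_on {1/4..1} \<phi>"
    unfolding \<phi>_def using continuous_on_orb3
    by (intro continuous_intros) (auto elim: continuous_on_subset)
  ultimately obtain e where e: "1/4 \<le> e" "e \<le> 1" "\<phi> e = 0"
    using IVT2'[of \<phi> 1 0 "1/4"] by auto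
  have x: "orb3 e = (1 - e) / (1 + e)" using e(3) by (simp add: \<phi>_def)
  have "e \<noteq> 1" using e(3) by (auto simp: \<phi>_def orb3_def)
  then have E: "e \<in> Edom" using e x by (simp add: Edom_def)
  have "orb3 e powr \<alpha> \<le> orb3 e"
    using EdomD[OF E] \<alpha>_gt_1 by (intro powr_le_one_le) auto
  then have "(1 + e) * orb3 e powr \<alpha> \<le> (1 + e) * orb3 e"
    using e by (intro mult_left_mono) auto
  also have "\<dots> = 1 - e" using e x by simp
  finally have "e \<le> orb4 e" unfolding orb4_def by simp
  then show ?thesis using that E orb4_less_iff[OF E] by fastforce
qed

lemma exp_logq_onto:
  assumes "0 < c" "c < 2"
  obtains e where "e \<in> Eadm" "exp (logq e) = c"
proof -
  obtain e1 where e1: "e1 \<in> Edom" "exp (logq e1) < c" using exp_logq_small[OF assms(1)] by blast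
  obtain e2 where e2: "e2 \<in> Edom" "2 \<le> exp (logq e2)" using exp_logq_large by blast
  have "exp (logq e1) < exp (logq e2)" using e1 e2 assms(2) by linarith
  then have "e1 < e2"
    using strict_mono_on_leD[OF logq_strict_mono_on e2(1) e1(1)] by fastforce
  have sub: "{e1..e2} \<subseteq> Edom" using e1 e2 Edom_downward EdomD(1)[OF e1(1)] by auto
  then obtain e where e: "e1 \<le> e" "e \<le> e2" "exp (logq e) = c"
    using IVT'[of "\<lambda>e. exp (logq e)" e1 c e2] e1 e2 assms \<open>e1 < e2\<close>
      continuous_on_subset[OF continuous_on_exp_logq] by fastforce
  then have "e \<in> Eadm" using sub assms by (auto simp: Eadm_def)
  then show ?thesis using that e by blast
qed

lemma epar_pos: "1 < a \<Longrightarrow> 0 < epar a"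
  using powr_less_mono[of 0 "\<alpha> - 1" a] \<alpha>_gt_1 by (simp add: epar_def)

lemma epar_inv_gt_1: "0 < e \<Longrightarrow> 1 < epar_inv e"
  using powr_less_mono2[of "1 / (\<alpha> - 1)" 1 "1 + e"] \<alpha>_gt_1 by (simp add: epar_inv_def)

lemma epar_epar_inv: "0 < e \<Longrightarrow> epar (epar_inv e) = e"
  using \<alpha>_gt_1 by (simp add: epar_def epar_inv_def powr_powr)

lemma epar_inj_on: "inj_on epar {1<..}"
proof (rule inj_onI)
  fix a b :: real assume "a \<in> {1<..}" "b \<in> {1<..}" "epar a = epar b"
  then have "(a powr (\<alpha> - 1)) powr (1 / (\<alpha> - 1)) = (b powr (\<alpha> - 1)) powr (1 / (\<alpha> - 1))"
    by (simp add: epar_def)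
  then show "a = b" using \<open>a \<in> {1<..}\<close> \<open>b \<in> {1<..}\<close> \<alpha>_gt_1 by (simp add: powr_powr)
qed

lemma rorb_2: "rorb \<alpha> a 2 = - epar a"
  by (simp add: numeral_2_eq_2 rorb_Suc epar_def)

lemma rorb_3: "1 < a \<Longrightarrow> rorb \<alpha> a 3 = orb3 (epar a)"
  using epar_pos[of a]
  by (simp add: numeral_3_eq_3 rorb_Suc rorb_2[unfolded numeral_2_eq_2] orb3_def epar_def)

lemma rorb_4:
  assumes "1 < a" "0 < orb3 (epar a)"
  shows "rorb \<alpha> a 4 = orb4 (epar a)"
proof -
  have "rorb \<alpha> a 4 = 1 - a powr (\<alpha> - 1) * \<bar>rorb \<alpha> a 3\<bar> powr \<alpha>"
    using rorb_Suc[of \<alpha> a 3] by simp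
  then show ?thesis using assms by (simp add: rorb_3 orb4_def epar_def)
qed

lemma admissible_iff: "admissible \<alpha> a \<longleftrightarrow> 1 < a \<and> epar a \<in> Eadm"
proof (cases "1 < a")
  case True
  have "0 < orb3 (epar a) \<Longrightarrow> epar a < 1 \<Longrightarrow> epar a \<in> Edom" using epar_pos[OF True]
    by (simp add: Edom_def)
  then show ?thesis
    using True epar_pos[OF True] rorb_2 rorb_3 rorb_4 orb4_gt_neg orb4_less_iff EdomD
    unfolding admissible_def Eadm_def by auto
qed (simp add: admissible_def)

lemma tpar_eq: "tpar \<alpha> a = 2 * artanh (epar a)"
proof -
  have "(- epar a - 1) / (- 1 + epar a) = (1 + epar a) / (1 - epar a)"
    by (simp add: divide_simps) (simp add: algebra_simps)
  then show ?thesis by (simp add: tpar_def poincare_def rorb_2 artanh_def)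
qed

lemma tpar_inj_on: "inj_on (tpar \<alpha>) {a. admissible \<alpha> a}"
proof (rule inj_onI)
  fix a b assume "a \<in> {a. admissible \<alpha> a}" "b \<in> {a. admissible \<alpha> a}" "tpar \<alpha> a = tpar \<alpha> b"
  then have ab: "a \<in> {1<..}" "b \<in> {1<..}" "epar a \<in> Edom" "epar b \<in> Edom"
    "artanh (epar a) = artanh (epar b)"
    by (auto simp: admissible_iff Eadm_def tpar_eq)
  then have "epar a = epar b"
    using EdomD[of "epar a"] EdomD[of "epar b"] by (metis tanh_artanh_real less_trans neg_less_0_iff_less)
  then show "a = b" using inj_onD[OF epar_inj_on] ab by blast
qed

lemma gfun_tpar:
  assumes "admissible \<alpha> a"
  shows "gfun \<alpha> (tpar \<alpha> a) = poincare (rorb \<alpha> a 2) (- rorb \<alpha> a 2) (rorb \<alpha> a 4)"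
proof -
  have "apar \<alpha> (tpar \<alpha> a) = a"
    unfolding apar_def using assms inj_onD[OF tpar_inj_on] by (intro the_equality) auto
  then show ?thesis by (simp add: gfun_def)
qed

lemma poincare_orb4:
  assumes "e \<in> Eadm"
  shows "poincare (- e) e (orb4 e) = 2 * artanh e + gexcess e"
proof -
  have E: "e \<in> Edom" "exp (logq e) < 2" using assms by (auto simp: Eadm_def)
  note D = EdomD[OF E(1)]
  define u where "u = orb3 e powr \<alpha>"
  have u: "0 < u" "u < 1" "1 - e < (1 + e) * u"
    using D orb4_less_iff[OF E(1)] E(2) by (auto simp: u_def orb4_def)
  have q: "exp (logq e) = (1 - u) * (1 - e) / (e * u)" using exp_logq[OF E(1)] by (simp add: u_def)
  have "(orb4 e + e) / (e - orb4 e) = (1 + e) / (1 - e) * (exp (logq e) / (2 - exp (logq e)))"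
    using D u unfolding q orb4_def u_def[symmetric] by (simp add: divide_simps) (simp add: algebra_simps)
  moreover have "0 < exp (logq e) / (2 - exp (logq e))" using E by simp
  ultimately have "ln ((orb4 e + e) / (e - orb4 e))
      = ln ((1 + e) / (1 - e)) + (logq e - ln (2 - exp (logq e)))"
    using D E by (simp add: ln_mult ln_div)
  then show ?thesis by (simp add: poincare_def artanh_def gexcess_def)
qed

lemma admissible_epar_inv:
  assumes "e \<in> Eadm"
  shows "admissible \<alpha> (epar_inv e)" "epar (epar_inv e) = e" "tpar \<alpha> (epar_inv e) = 2 * artanh e"
proof -
  have "0 < e" using assms EdomD(1) by (simp add: Eadm_def)
  then show "epar (epar_inv e) = e" "admissible \<alpha> (epar_inv e)"
    using assms by (simp_all add: admissible_iff epar_inv_gt_1 epar_epar_inv)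
  then show "tpar \<alpha> (epar_inv e) = 2 * artanh e" by (simp add: tpar_eq)
qed

lemma Tset_eq: "Tset \<alpha> = {t. tanh (t / 2) \<in> Eadm}"
proof (intro equalityI subsetI)
  fix t assume "t \<in> Tset \<alpha>"
  then obtain a where "admissible \<alpha> a" "t = 2 * artanh (epar a)"
    by (auto simp: Tset_def tpar_eq)
  then show "t \<in> {t. tanh (t / 2) \<in> Eadm}"
    using EdomD[of "epar a"] by (auto simp: admissible_iff Eadm_def tanh_artanh_real)
next
  fix t assume "t \<in> {t. tanh (t / 2) \<in> Eadm}"
  then have "admissible \<alpha> (epar_inv (tanh (t / 2)))" "tpar \<alpha> (epar_inv (tanh (t / 2))) = t"
    using admissible_epar_inv[of "tanh (t / 2)"] by (simp_all add: artanh_tanh_real)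
  then show "t \<in> Tset \<alpha>" unfolding Tset_def by (metis image_eqI mem_Collect_eq)
qed

lemma gfun_eq:
  assumes "t \<in> Tset \<alpha>"
  shows "gfun \<alpha> t = t + gexcess (tanh (t / 2))"
proof -
  define e where "e = tanh (t / 2)"
  have e: "e \<in> Eadm" using assms by (simp add: Tset_eq e_def)
  then have "0 < e" "0 < orb3 e" using EdomD by (auto simp: Eadm_def)
  note a = admissible_epar_inv[OF e]
  then have "1 < epar_inv e" by (simp add: admissible_def)
  then have "gfun \<alpha> (tpar \<alpha> (epar_inv e)) = poincare (- e) e (orb4 e)"
    using gfun_tpar[OF a(1)] rorb_2 rorb_4 a(2) \<open>0 < orb3 e\<close> by simp
  also have "\<dots> = t + gexcess e"
    using poincare_orb4[OF e] by (simp add: e_def artanh_tanh_real)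
  finally show ?thesis using a(3) by (simp add: e_def artanh_tanh_real)
qed

lemma Tset_pos: "Tset \<alpha> \<subseteq> {0<..}"
proof
  fix t assume "t \<in> Tset \<alpha>"
  then have "tanh (t / 2) \<in> Edom" by (simp add: Tset_eq Eadm_def)
  then have "0 < tanh (t / 2)" by (rule EdomD(1))
  then show "t \<in> {0<..}" by simp
qed

lemma open_Tset: "open (Tset \<alpha>)"
proof -
  have "continuous_on UNIV (\<lambda>t::real. tanh (t / 2))" by (intro continuous_intros) auto
  then show ?thesis
    unfolding Tset_eq vimage_def[symmetric] by (rule open_vimage[OF open_Eadm])
qed

lemma has_real_derivative_gfun:
  assumes "t \<in> Tset \<alpha>"
  shows "\<exists>D. (gfun \<alpha> has_real_derivative D) (at t) \<and> 1 < D"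
proof -
  define e where "e = tanh (t / 2)"
  have e: "e \<in> Eadm" using assms by (simp add: Tset_eq e_def)
  define H where "H = 2 * dlogq e / (2 - exp (logq e))"
  have H: "(gexcess has_real_derivative H) (at (tanh (t / 2)))" "0 < H"
    using has_real_derivative_gexcess[OF e] e dlogq_pos by (auto simp: H_def e_def Eadm_def)
  have "((\<lambda>t. tanh (t / 2)) has_real_derivative (1 - e^2) / 2) (at t)"
    unfolding e_def by (auto intro!: derivative_eq_intros)
  from DERIV_add[OF DERIV_ident DERIV_chain2[OF H(1) this]]
  have "(gfun \<alpha> has_real_derivative 1 + H * ((1 - e^2) / 2)) (at t)"
    by (rule has_field_derivative_transform_within_open[OF _ open_Tset assms]) (simp add: gfun_eq)
  moreover have "e^2 < 1"
    using tanh_real_bounds[of "t / 2"] by (simp add: e_def abs_square_less_1 abs_less_iff)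
  then have "1 < 1 + H * ((1 - e^2) / 2)" using H(2) by simp
  ultimately show ?thesis by blast
qed

lemma atLeastAtMost_subset_Tset:
  assumes "s \<in> Tset \<alpha>" "t \<in> Tset \<alpha>"
  shows "{s..t} \<subseteq> Tset \<alpha>"
proof
  fix x assume x: "x \<in> {s..t}"
  moreover have "0 < s" using assms(1) Tset_pos by auto
  ultimately show "x \<in> Tset \<alpha>"
    using assms(2) Eadm_downward[of "tanh (t / 2)" "tanh (x / 2)"] by (simp add: Tset_eq)
qed

lemma gfun_strict_mono_on: "strict_mono_on (Tset \<alpha>) (gfun \<alpha>)"
proof (rule strict_mono_onI)
  fix s t assume st: "s \<in> Tset \<alpha>" "t \<in> Tset \<alpha>" "s < t"
  show "gfun \<alpha> s < gfun \<alpha> t"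
  proof (rule DERIV_pos_imp_increasing[OF st(3)])
    fix x assume "s \<le> x" "x \<le> t"
    then have "x \<in> Tset \<alpha>" using atLeastAtMost_subset_Tset[OF st(1,2)] by auto
    then obtain D where "(gfun \<alpha> has_real_derivative D) (at x)" "1 < D"
      using has_real_derivative_gfun by blast
    then show "\<exists>D. (gfun \<alpha> has_real_derivative D) (at x) \<and> 0 < D" by auto
  qed
qed

lemma artanh_in_Tset:
  assumes "e \<in> Eadm"
  shows "2 * artanh e \<in> Tset \<alpha>" "gfun \<alpha> (2 * artanh e) = 2 * artanh e + gexcess e"
proof -
  have "tanh (2 * artanh e / 2) = e"
    using assms EdomD(1,2)[of e] by (simp add: Eadm_def tanh_artanh_real)
  then show "2 * artanh e \<in> Tset \<alpha>" "gfun \<alpha> (2 * artanh e) = 2 * artanh e + gexcess e"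
    using assms gfun_eq[of "2 * artanh e"] by (simp_all add: Tset_eq)
qed

lemma gfun_below:
  obtains t where "t \<in> Tset \<alpha>" "gfun \<alpha> t \<le> y"
proof -
  define c where "c = min 1 (exp (y - ln 2))"
  obtain e where e: "e \<in> Edom" "e \<le> 1/3" "exp (logq e) < c"
    using exp_logq_small[of c] by (auto simp: c_def)
  moreover have "c \<le> 1" by (simp add: c_def)
  ultimately have "e \<in> Eadm" by (simp add: Eadm_def)
  note E = EdomD[OF e(1)]
  have "(1 + e) / (1 - e) \<le> 2" using E e(2) by (simp add: divide_simps)
  then have "2 * artanh e \<le> ln 2" using E by (simp add: artanh_def)
  moreover have "logq e < y - ln 2"
    using e(3) by (simp add: c_def)
  moreover have "1 < 2 - exp (logq e)" using e(3) \<open>c \<le> 1\<close> by linarith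
  then have "0 < ln (2 - exp (logq e))" by (rule ln_gt_zero)
  ultimately have "gfun \<alpha> (2 * artanh e) \<le> y"
    using artanh_in_Tset(2)[OF \<open>e \<in> Eadm\<close>] by (simp add: gexcess_def)
  then show ?thesis using that artanh_in_Tset(1)[OF \<open>e \<in> Eadm\<close>] by blast
qed

lemma gfun_above:
  obtains t where "t \<in> Tset \<alpha>" "y \<le> gfun \<alpha> t"
proof -
  define z where "z = max y 0"
  define c where "c = 2 * exp z / (1 + exp z)"
  have "0 < 1 + exp z" by (simp add: add_pos_pos)
  then have c: "0 < c" "c < 2" "c / (2 - c) = exp z"
    by (simp_all add: c_def divide_simps)
  then obtain e where e: "e \<in> Eadm" "exp (logq e) = c" using exp_logq_onto by blast
  then have "logq e = ln c" by (metis ln_exp)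
  moreover have "ln c - ln (2 - c) = z" using c ln_div[of c "2 - c"] by simp
  ultimately have "gexcess e = z" using e(2) by (simp add: gexcess_def)
  moreover have "0 < 2 * artanh e" using artanh_in_Tset(1)[OF e(1)] Tset_pos by auto
  ultimately have "y \<le> gfun \<alpha> (2 * artanh e)"
    using artanh_in_Tset(2)[OF e(1)] by (simp add: z_def)
  then show ?thesis using that artanh_in_Tset(1)[OF e(1)] by blast
qed

lemma gfun_image: "gfun \<alpha> ` Tset \<alpha> = UNIV"
proof -
  have "y \<in> gfun \<alpha> ` Tset \<alpha>" for y
  proof -
    obtain s where s: "s \<in> Tset \<alpha>" "gfun \<alpha> s \<le> y" by (rule gfun_below)
    obtain t where t: "t \<in> Tset \<alpha>" "y \<le> gfun \<alpha> t" by (rule gfun_above)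
    note st = s(1) t(1) s(2) t(2)
    then have "s \<le> t" using strict_mono_onD[OF gfun_strict_mono_on, of t s] by force
    have "isCont (gfun \<alpha>) x" if "x \<in> {s..t}" for x
    proof -
      have "x \<in> Tset \<alpha>" using that atLeastAtMost_subset_Tset[OF st(1,2)] by blast
      then obtain D where "(gfun \<alpha> has_real_derivative D) (at x)"
        using has_real_derivative_gfun by blast
      then show ?thesis by (rule DERIV_isCont)
    qed
    then have "continuous_on {s..t} (gfun \<alpha>)" by (intro continuous_at_imp_continuous_on) blast
    then obtain x where "s \<le> x" "x \<le> t" "gfun \<alpha> x = y"
      using IVT'[of "gfun \<alpha>" s y t] st \<open>s \<le> t\<close> by blast
    then show ?thesis using atLeastAtMost_subset_Tset[OF st(1,2)] by force
  qed
  then show ?thesis by blast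
qed

lemma ex1_admissible_orbit4_eq_0: "\<exists>!a. admissible \<alpha> a \<and> rorb \<alpha> a 4 = 0"
proof -
  have zero_iff: "rorb \<alpha> a 4 = 0 \<longleftrightarrow> gfun \<alpha> (tpar \<alpha> a) = 0" if "admissible \<alpha> a" for a
  proof -
    have "rorb \<alpha> a 2 < rorb \<alpha> a 4" "rorb \<alpha> a 4 < - rorb \<alpha> a 2"
      using that by (simp_all add: admissible_def)
    then show ?thesis by (simp add: gfun_tpar[OF that] poincare_neg_eq_0_iff)
  qed
  have tpar_in: "tpar \<alpha> a \<in> Tset \<alpha>" if "admissible \<alpha> a" for a
    using that by (simp add: Tset_def)
  obtain t where "t \<in> Tset \<alpha>" "gfun \<alpha> t = 0"
    using gfun_image by (metis UNIV_I imageE)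
  then obtain a where a: "admissible \<alpha> a" "gfun \<alpha> (tpar \<alpha> a) = 0"
    by (auto simp: Tset_def)
  show ?thesis
  proof (rule ex1I)
    show "admissible \<alpha> a \<and> rorb \<alpha> a 4 = 0" using a zero_iff by blast
    fix b assume b: "admissible \<alpha> b \<and> rorb \<alpha> b 4 = 0"
    then have "gfun \<alpha> (tpar \<alpha> b) = gfun \<alpha> (tpar \<alpha> a)" using a zero_iff[of b] by simp
    then have "tpar \<alpha> a = tpar \<alpha> b"
      using strict_mono_on_eqD[OF gfun_strict_mono_on] tpar_in a b by blast
    then show "b = a" using inj_onD[OF tpar_inj_on] a b by force
  qed
qed

end

theorem theorem3p1:
  fixes \<alpha> :: real
  assumes "\<alpha> > 1"
  shows "Tset \<alpha> \<subseteq> {0<..}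
    \<and> bij_betw (gfun \<alpha>) (Tset \<alpha>) (UNIV :: real set)
    \<and> strict_mono_on UNIV (the_inv_into (Tset \<alpha>) (gfun \<alpha>))
    \<and> (\<forall>t \<in> Tset \<alpha>. \<exists>D. (gfun \<alpha> has_real_derivative D) (at t) \<and> D > 1)
    \<and> (\<exists>!a. admissible \<alpha> a \<and> rorb \<alpha> a 4 = 0)"
proof -
  note mono = gfun_strict_mono_on[OF assms] and image = gfun_image[OF assms]
  have "bij_betw (gfun \<alpha>) (Tset \<alpha>) UNIV"
    using strict_mono_on_imp_inj_on[OF mono] image by (simp add: bij_betw_def)
  moreover have "strict_mono_on UNIV (the_inv_into (Tset \<alpha>) (gfun \<alpha>))"
    using strict_mono_on_the_inv_into[OF mono] image by simp
  moreover have "\<forall>t \<in> Tset \<alpha>. \<exists>D. (gfun \<alpha> has_real_derivative D) (at t) \<and> D > 1"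
    using has_real_derivative_gfun[OF assms] by blast
  ultimately show ?thesis
    using Tset_pos[OF assms] ex1_admissible_orbit4_eq_0[OF assms] by blast
qed

end
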